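(* Given any fixed graph $G$ (possibly disconnected) and any $\varepsilon > 0$, there is a constant $C = C(G, \varepsilon) > 0$ and a strategy for the USTSR process on $n$ vertices that constructs $(1-\varepsilon) \tfrac{n}{|G|}$ vertex-disjoint copies of $G$ within at most $C n$ rounds with high probability.
   Context: The USTSR process on $n$ vertices: starting from the empty graph on $V_n=\{v_1,\dots,v_n\}$, at each round $i\ge1$ a spanning tree $T_i$ of $K_n$ is sampled uniformly at random, independently of previous rounds, and Builder adds one edge of $T_i$ of his choice (chosen according to a strategy, i.e. a rule selecting an edge of the current tree given the current graph). $|G|$ is the number of vertices of $G$. "With high probability" means with probability tending to $1$ as $n\to\infty$. *)

theory Defs
  imports "HOL-Probability.Probability"
begin

definition complete_edges :: "nat \<Rightarrow> nat set set" where
  "complete_edges n = {{u, v} | u v. u < n \<and> v < n \<and> u \<noteq> v}"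

definition edge_rel :: "'a set set \<Rightarrow> ('a \<times> 'a) set" where
  "edge_rel E = {(x, y). {x, y} \<in> E}"

definition spanning_tree :: "nat \<Rightarrow> nat set set \<Rightarrow> bool" where
  "spanning_tree n T \<longleftrightarrow>
     T \<subseteq> complete_edges n \<and>
     (\<forall>u<n. \<forall>v<n. (u, v) \<in> (edge_rel T)\<^sup>*) \<and>
     (\<forall>e\<in>T. \<forall>u v. e = {u, v} \<longrightarrow> (u, v) \<notin> (edge_rel (T - {e}))\<^sup>*)"

definition spanning_trees :: "nat \<Rightarrow> nat set set set" where
  "spanning_trees n = {T. spanning_tree n T}"

primrec ustsr_graph :: "nat \<Rightarrow> (nat set set \<Rightarrow> nat set set \<Rightarrow> nat set) \<Rightarrow> nat \<Rightarrow> nat set set pmf" where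
  "ustsr_graph n S 0 = return_pmf {}"
| "ustsr_graph n S (Suc k) =
     bind_pmf (ustsr_graph n S k)
       (\<lambda>H. map_pmf (\<lambda>T. insert (S H T) H) (pmf_of_set (spanning_trees n)))"

definition has_disjoint_copies ::
  "'a set \<Rightarrow> 'a set set \<Rightarrow> nat \<Rightarrow> nat set set \<Rightarrow> nat \<Rightarrow> bool" where
  "has_disjoint_copies VG EG n H m \<longleftrightarrow>
     (\<exists>f :: nat \<Rightarrow> 'a \<Rightarrow> nat.
        (\<forall>i<m. inj_on (f i) VG \<and> f i ` VG \<subseteq> {..<n} \<and> (\<forall>e\<in>EG. f i ` e \<in> H)) \<and>
        (\<forall>i<m. \<forall>j<m. i \<noteq> j \<longrightarrow> f i ` VG \<inter> f j ` VG = {}))"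

end

(*
  Split the vertices into n div k blocks of k = |V(G)| consecutive vertices. A block spanning a
  clique contains a copy of G, so it suffices to complete (1 - epsilon) n / k blocks; Builder always
  takes a missing edge inside a block when the current tree offers one. While too few blocks are
  complete, the missing block edges contain a matching M of about delta n edges. An edge of K_n
  lies in a uniform random spanning tree with probability at least 1/n, since a tree has at least
  n/2 edges, and by symmetry two disjoint edges lie in it jointly with probability at most 8/n^2,
  since a tree has at most n - 1 edges; so by inclusion-exclusion the tree meets M with
  probability at least delta/2. Hence the potential 2^-(number of block edges built), set to 0
  once enough blocks are complete, shrinks in expectation by the factor 1 - delta/4 per round.
  As there are at most n k block edges, after c n rounds the failure probability is at most
  2^(n k) (1 - delta/4)^(c n), which is at most 2^-n for a suitable constant c.
*)
theory Submission
  imports Defs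
begin

section \<open>Spanning trees of the complete graph\<close>

lemma edge_rel_iff [simp]: "(x, y) \<in> edge_rel E \<longleftrightarrow> {x, y} \<in> E"
  by (simp add: edge_rel_def)

lemma reachable_sym: "(x, y) \<in> (edge_rel E)\<^sup>* \<Longrightarrow> (y, x) \<in> (edge_rel E)\<^sup>*"
proof (induction rule: rtrancl_induct)
  case (step y z)
  then have "(z, y) \<in> edge_rel E" by (simp add: insert_commute[of z y])
  then show ?case using step.IH by (rule converse_rtrancl_into_rtrancl)
qed simp

lemma reachable_mono: "(x, y) \<in> (edge_rel E)\<^sup>* \<Longrightarrow> E \<subseteq> E' \<Longrightarrow> (x, y) \<in> (edge_rel E')\<^sup>*"
proof -
  assume "(x, y) \<in> (edge_rel E)\<^sup>*" and "E \<subseteq> E'"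
  moreover from \<open>E \<subseteq> E'\<close> have "edge_rel E \<subseteq> edge_rel E'" by (auto simp: edge_rel_def)
  ultimately show ?thesis using rtrancl_mono by blast
qed

lemma reachable_step: "(x, y) \<in> (edge_rel E)\<^sup>* \<Longrightarrow> {y, z} \<in> E \<Longrightarrow> (x, z) \<in> (edge_rel E)\<^sup>*"
  by (simp add: rtrancl_into_rtrancl)

lemma reachable_image:
  "(x, y) \<in> (edge_rel E)\<^sup>* \<Longrightarrow> (f x, f y) \<in> (edge_rel ((`) f ` E))\<^sup>*"
proof (induction rule: rtrancl_induct)
  case (step y z)
  then have "f ` {y, z} \<in> (`) f ` E" by (intro imageI) simp
  with step.IH show ?case by (simp add: reachable_step)
qed simp

lemma reachable_remove_edge:
  assumes "(x, y) \<in> (edge_rel E)\<^sup>*"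
  shows "(x, y) \<in> (edge_rel (E - {{u, v}}))\<^sup>* \<or> (x, u) \<in> (edge_rel (E - {{u, v}}))\<^sup>*
         \<or> (x, v) \<in> (edge_rel (E - {{u, v}}))\<^sup>*"
  using assms
proof (induction rule: rtrancl_induct)
  case (step y z)
  show ?case
  proof (cases "{y, z} = {u, v}")
    case True
    then have "y = u \<or> y = v" by (metis doubleton_eq_iff)
    with step.IH show ?thesis by auto
  next
    case False
    with step.hyps(2) have "{y, z} \<in> E - {{u, v}}" by simp
    then show ?thesis using step.IH reachable_step[of x y "E - {{u, v}}" z] by argo
  qed
qed simp

lemma complete_edges_eq: "complete_edges n = {A. A \<subseteq> {..<n} \<and> card A = 2}"
  unfolding complete_edges_def by (auto simp: card_2_iff)

lemma complete_edgesE: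
  assumes "e \<in> complete_edges n"
  obtains a b where "e = {a, b}" "a \<noteq> b" "a < n" "b < n"
  using assms unfolding complete_edges_def by blast

lemma finite_complete_edges: "finite (complete_edges n)"
  unfolding complete_edges_eq by (rule finite_subset[of _ "Pow {..<n}"]) auto

lemma card_complete_edges: "card (complete_edges n) = n choose 2"
  unfolding complete_edges_eq using n_subsets[of "{..<n}" 2] by simp

lemma spanning_treeI:
  assumes "T \<subseteq> complete_edges n"
    and "\<And>u v. u < n \<Longrightarrow> v < n \<Longrightarrow> (u, v) \<in> (edge_rel T)\<^sup>*"
    and "\<And>u v. {u, v} \<in> T \<Longrightarrow> (u, v) \<notin> (edge_rel (T - {{u, v}}))\<^sup>*"
  shows "spanning_tree n T"
  using assms unfolding spanning_tree_def by blast

lemma spanning_tree_subset: "spanning_tree n T \<Longrightarrow> T \<subseteq> complete_edges n"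
  by (simp add: spanning_tree_def)

lemma spanning_tree_connected:
  "spanning_tree n T \<Longrightarrow> u < n \<Longrightarrow> v < n \<Longrightarrow> (u, v) \<in> (edge_rel T)\<^sup>*"
  by (simp add: spanning_tree_def)

lemma spanning_tree_bridge:
  "spanning_tree n T \<Longrightarrow> {u, v} \<in> T \<Longrightarrow> (u, v) \<notin> (edge_rel (T - {{u, v}}))\<^sup>*"
  unfolding spanning_tree_def by blast

lemma finite_spanning_trees: "finite (spanning_trees n)"
  by (rule finite_subset[of _ "Pow (complete_edges n)"])
    (auto simp: spanning_trees_def spanning_tree_def finite_complete_edges)

lemma spanning_tree_star: "spanning_tree n {{0, v} | v. 0 < v \<and> v < n}" (is "spanning_tree n ?S")
proof -
  have from_root: "(0, v) \<in> (edge_rel ?S)\<^sup>*" if "v < n" for v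
  proof (cases "v = 0")
    case False
    then have "0 < v" by simp
    then have "{0, v} \<in> ?S" using that by blast
    then show ?thesis by (intro r_into_rtrancl) simp
  qed simp
  have connected: "(u, v) \<in> (edge_rel ?S)\<^sup>*" if "u < n" "v < n" for u v
    using reachable_sym[OF from_root[OF \<open>u < n\<close>]] from_root[OF \<open>v < n\<close>] by (rule rtrancl_trans)
  have bridge: "(u, v) \<notin> (edge_rel (?S - {{u, v}}))\<^sup>*" if "{u, v} \<in> ?S" for u v
  proof
    define e where "e = {u, v}"
    assume path: "(u, v) \<in> (edge_rel (?S - {e}))\<^sup>*"
    obtain w where w: "e = {0, w}" "0 < w" using \<open>{u, v} \<in> ?S\<close> unfolding e_def by blast
    \<comment> \<open>every remaining edge avoids the leaf \<open>w\<close>, so no path enters or leaves it\<close>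
    have isolated: "x = w \<longleftrightarrow> y = w" if "(x, y) \<in> (edge_rel (?S - {e}))\<^sup>*" for x y
      using that
    proof (induction rule: rtrancl_induct)
      case (step y z)
      then have "{y, z} \<in> ?S" "{y, z} \<noteq> e" by simp_all
      then obtain v' where v': "{y, z} = {0, v'}" by blast
      then have "v' \<noteq> w" using \<open>{y, z} \<noteq> e\<close> w(1) by auto
      moreover have "{y, z} \<subseteq> {0, v'}" using v' by simp
      ultimately have "y \<noteq> w \<and> z \<noteq> w" using w(2) by blast
      then show ?case using step.IH by simp
    qed simp
    have "{u, v} = {0, w}" using e_def w(1) by simp
    then have "(u = 0 \<and> v = w) \<or> (u = w \<and> v = 0)" by (simp add: doubleton_eq_iff)
    then show False using isolated[OF path] w(2) by auto
  qed
  have edges: "?S \<subseteq> complete_edges n"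
  proof
    fix e assume "e \<in> ?S"
    then obtain v where "e = {0, v}" "0 < v" "v < n" by blast
    then show "e \<in> complete_edges n" unfolding complete_edges_def
      by (intro CollectI exI[of _ 0] exI[of _ v]) simp
  qed
  from edges connected bridge show ?thesis by (rule spanning_treeI)
qed

lemma spanning_trees_nonempty: "spanning_trees n \<noteq> {}"
  using spanning_tree_star[of n] by (auto simp: spanning_trees_def)

lemma spanning_tree_image:
  assumes \<sigma>: "\<sigma> permutes {..<n}" and T: "spanning_tree n T"
  shows "spanning_tree n ((`) \<sigma> ` T)"
proof -
  have inj: "inj \<sigma>" using permutes_bij[OF \<sigma>] bij_is_inj by blast
  have inv_\<sigma>: "inv \<sigma> permutes {..<n}" using permutes_inv[OF \<sigma>] .
  have \<sigma>_inv: "\<sigma> (inv \<sigma> x) = x" for x using permutes_inverses(1)[OF \<sigma>] .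
  have in_range: "\<sigma> x < n \<longleftrightarrow> x < n" "inv \<sigma> x < n \<longleftrightarrow> x < n" for x
    using permutes_in_image[OF \<sigma>] permutes_in_image[OF inv_\<sigma>] by auto
  have edges: "(`) \<sigma> ` T \<subseteq> complete_edges n"
  proof
    fix e' assume "e' \<in> (`) \<sigma> ` T"
    then obtain e where "e \<in> T" "e' = \<sigma> ` e" by blast
    moreover obtain a b where "e = {a, b}" "a \<noteq> b" "a < n" "b < n"
      using spanning_tree_subset[OF T] \<open>e \<in> T\<close> by (blast elim: complete_edgesE)
    ultimately have "e' = {\<sigma> a, \<sigma> b}" "\<sigma> a \<noteq> \<sigma> b" "\<sigma> a < n" "\<sigma> b < n"
      using inj in_range(1) by (auto simp: inj_eq)
    then show "e' \<in> complete_edges n" unfolding complete_edges_def by blast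
  qed
  moreover have "(u, v) \<in> (edge_rel ((`) \<sigma> ` T))\<^sup>*" if "u < n" "v < n" for u v
  proof -
    have "(inv \<sigma> u, inv \<sigma> v) \<in> (edge_rel T)\<^sup>*"
      using spanning_tree_connected[OF T] that in_range(2) by blast
    from reachable_image[OF this, of \<sigma>] show ?thesis by (simp add: \<sigma>_inv)
  qed
  moreover have "(u, v) \<notin> (edge_rel ((`) \<sigma> ` T - {{u, v}}))\<^sup>*" if uv: "{u, v} \<in> (`) \<sigma> ` T" for u v
  proof
    assume path: "(u, v) \<in> (edge_rel ((`) \<sigma> ` T - {{u, v}}))\<^sup>*"
    obtain e where e: "e \<in> T" "{u, v} = \<sigma> ` e" using uv by blast
    have "e = inv \<sigma> ` {u, v}" using e(2) inj by (simp add: image_comp)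
    then have e_eq: "e = {inv \<sigma> u, inv \<sigma> v}" by simp
    have "(`) \<sigma> ` T - {{u, v}} = (`) \<sigma> ` (T - {e})"
      using e inj by (auto simp: inj_image_eq_iff)
    then have "(`) (inv \<sigma>) ` ((`) \<sigma> ` T - {{u, v}}) = T - {e}"
      by (simp add: image_image inv_f_f[OF inj])
    then have "(inv \<sigma> u, inv \<sigma> v) \<in> (edge_rel (T - {e}))\<^sup>*"
      using reachable_image[OF path, of "inv \<sigma>"] by simp
    then show False using spanning_tree_bridge[OF T] e(1) e_eq by blast
  qed
  ultimately show ?thesis by (rule spanning_treeI)
qed

lemma spanning_tree_covers:
  assumes "n \<ge> 2" "spanning_tree n T" "v < n"
  shows "\<exists>e\<in>T. v \<in> e"
proof -
  define u where "u = (if v = 0 then 1 else 0::nat)"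
  have "u < n" "u \<noteq> v" using assms by (auto simp: u_def)
  then have "(v, u) \<in> (edge_rel T)\<^sup>*" using spanning_tree_connected assms by blast
  then obtain w where "(v, w) \<in> edge_rel T" using \<open>u \<noteq> v\<close> by (metis converse_rtranclE)
  then show ?thesis by auto
qed

lemma spanning_tree_card_ge:
  assumes "n \<ge> 2" "spanning_tree n T"
  shows "n \<le> 2 * card T"
proof -
  have edges: "\<And>e. e \<in> T \<Longrightarrow> e \<subseteq> {..<n} \<and> card e = 2"
    using spanning_tree_subset[OF assms(2)] by (auto simp: complete_edges_eq)
  have "{..<n} \<subseteq> \<Union>T" using spanning_tree_covers[OF assms] by auto
  then have "n \<le> card (\<Union>T)"
    using edges by (metis card_lessThan card_mono finite_lessThan Sup_least finite_subset)
  also have "\<dots> \<le> (\<Sum>e\<in>T. card e)" by (rule card_Union_le_sum_card)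
  also have "\<dots> = 2 * card T" using edges by simp
  finally show ?thesis .
qed

lemma spanning_tree_shared_endpoint:
  assumes T: "spanning_tree n T" and "r < n" "w < n"
    and ef: "e \<in> T" "f \<in> T" "w \<in> e" "w \<in> f"
    and cut_e: "(r, w) \<notin> (edge_rel (T - {e}))\<^sup>*" and cut_f: "(r, w) \<notin> (edge_rel (T - {f}))\<^sup>*"
  shows "e = f"
proof (rule ccontr)
  assume "e \<noteq> f"
  have other_endpoint: "\<exists>x. g = {w, x}" if "g \<in> T" "w \<in> g" for g
  proof -
    obtain a b where "g = {a, b}" using spanning_tree_subset[OF T] \<open>g \<in> T\<close> by (blast elim: complete_edgesE)
    then have "g = {w, if w = a then b else a}" using \<open>w \<in> g\<close> by auto
    then show ?thesis ..
  qed
  obtain x y where e: "e = {w, x}" and f: "f = {w, y}" using other_endpoint ef by metis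
  \<comment> \<open>every path from \<open>r\<close> to \<open>w\<close> uses \<open>e\<close>, so it first reaches \<open>x\<close>, avoiding \<open>f\<close> or passing through it\<close>
  have "(r, w) \<in> (edge_rel T)\<^sup>*" using spanning_tree_connected[OF T] assms(2,3) .
  then have "(r, x) \<in> (edge_rel (T - {e}))\<^sup>*"
    using reachable_remove_edge[of r w T w x] cut_e e by auto
  then have "(r, x) \<in> (edge_rel (T - {e} - {f}))\<^sup>* \<or> (r, w) \<in> (edge_rel (T - {e} - {f}))\<^sup>*
      \<or> (r, y) \<in> (edge_rel (T - {e} - {f}))\<^sup>*"
    using reachable_remove_edge[of r x "T - {e}" w y] f by simp
  moreover have "e \<in> T - {f}" "f \<in> T - {e}" using ef \<open>e \<noteq> f\<close> by auto
  ultimately show False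
  proof (elim disjE)
    assume "(r, x) \<in> (edge_rel (T - {e} - {f}))\<^sup>*"
    then have "(r, x) \<in> (edge_rel (T - {f}))\<^sup>*" by (rule reachable_mono) auto
    moreover have "{x, w} \<in> T - {f}" using \<open>e \<in> T - {f}\<close> e by (simp add: insert_commute)
    ultimately show False using cut_f by (blast dest: reachable_step)
  next
    assume "(r, w) \<in> (edge_rel (T - {e} - {f}))\<^sup>*"
    then have "(r, w) \<in> (edge_rel (T - {e}))\<^sup>*" by (rule reachable_mono) auto
    then show False using cut_e by blast
  next
    assume "(r, y) \<in> (edge_rel (T - {e} - {f}))\<^sup>*"
    then have "(r, y) \<in> (edge_rel (T - {e}))\<^sup>*" by (rule reachable_mono) auto
    moreover have "{y, w} \<in> T - {e}" using \<open>f \<in> T - {e}\<close> f by (simp add: insert_commute)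
    ultimately show False using cut_e by (blast dest: reachable_step)
  qed
qed

lemma spanning_tree_card_le:
  assumes T: "spanning_tree n T"
  shows "card T \<le> n - 1"
proof (cases "n = 0")
  case True
  then show ?thesis using spanning_tree_subset[OF T] by (simp add: complete_edges_def)
next
  case False
  \<comment> \<open>map each edge to its endpoint cut off from the root \<open>0\<close> when the edge is deleted\<close>
  define far where "far e = (SOME w. w \<in> e \<and> (0, w) \<notin> (edge_rel (T - {e}))\<^sup>*)" for e
  have far: "far e \<in> e \<and> far e < n \<and> (0, far e) \<notin> (edge_rel (T - {e}))\<^sup>*" if "e \<in> T" for e
  proof -
    obtain u v where uv: "e = {u, v}" "u < n" "v < n"
      using spanning_tree_subset[OF T] \<open>e \<in> T\<close> by (blast elim: complete_edgesE)
    have "(u, v) \<notin> (edge_rel (T - {e}))\<^sup>*" using spanning_tree_bridge[OF T] that uv(1) by blast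
    moreover have "(u, v) \<in> (edge_rel (T - {e}))\<^sup>*"
      if "(0, u) \<in> (edge_rel (T - {e}))\<^sup>*" "(0, v) \<in> (edge_rel (T - {e}))\<^sup>*"
      using reachable_sym[OF that(1)] that(2) by (rule rtrancl_trans)
    ultimately have "\<exists>w. w \<in> e \<and> (0, w) \<notin> (edge_rel (T - {e}))\<^sup>*" using uv(1) by blast
    from someI_ex[OF this] show ?thesis using uv unfolding far_def by auto
  qed
  have "far e \<noteq> 0" if "e \<in> T" for e
    using far[OF that] by (metis rtrancl.rtrancl_refl)
  with far have "far ` T \<subseteq> {1..<n}" by fastforce
  moreover have "inj_on far T"
  proof (rule inj_onI)
    fix e f assume "e \<in> T" "f \<in> T" "far e = far f"
    with far[OF \<open>e \<in> T\<close>] far[OF \<open>f \<in> T\<close>] show "e = f"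
      using spanning_tree_shared_endpoint[OF T, of 0 "far e" e f] False by simp
  qed
  ultimately have "card T \<le> card {1..<n}" using card_inj_on_le[of far T "{1..<n}"] by blast
  then show ?thesis by simp
qed

section \<open>Spanning trees through given edges\<close>

definition trees_containing :: "nat \<Rightarrow> nat set set \<Rightarrow> nat set set set" where
  "trees_containing n F = {T \<in> spanning_trees n. F \<subseteq> T}"

lemma card_trees_containing_image:
  assumes \<sigma>: "\<sigma> permutes {..<n}"
  shows "card (trees_containing n ((`) \<sigma> ` F)) = card (trees_containing n F)"
proof -
  let ?img = "(`) ((`) \<sigma>)"
  have inj: "inj \<sigma>" using permutes_bij[OF \<sigma>] bij_is_inj by blast
  have inv_img: "(`) ((`) (inv \<sigma>)) (?img X) = X" for X
    by (simp add: image_image inv_f_f[OF inj])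
  have img_inv: "?img ((`) ((`) (inv \<sigma>)) X) = X" for X
    by (simp add: image_image permutes_inverses(1)[OF \<sigma>])
  have inj_img: "inj ?img" by (metis inv_img injI)
  have "?img ` trees_containing n F \<subseteq> trees_containing n (?img F)"
  proof
    fix T' assume "T' \<in> ?img ` trees_containing n F"
    then obtain T where "T' = ?img T" "spanning_tree n T" "F \<subseteq> T"
      by (auto simp: trees_containing_def spanning_trees_def)
    then show "T' \<in> trees_containing n (?img F)"
      using spanning_tree_image[OF \<sigma>] by (auto simp: trees_containing_def spanning_trees_def)
  qed
  moreover have "T' \<in> ?img ` trees_containing n F" if "T' \<in> trees_containing n (?img F)" for T'
  proof -
    define T where "T = (`) ((`) (inv \<sigma>)) T'"
    have "spanning_tree n T" "?img F \<subseteq> T'"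
      using that spanning_tree_image[OF permutes_inv[OF \<sigma>]]
      by (simp_all add: T_def trees_containing_def spanning_trees_def)
    moreover from \<open>?img F \<subseteq> T'\<close> have "F \<subseteq> T"
      unfolding T_def using inv_img[of F] by (metis image_mono)
    moreover have "T' = ?img T" unfolding T_def by (rule img_inv[symmetric])
    ultimately show ?thesis by (auto simp: trees_containing_def spanning_trees_def)
  qed
  ultimately have "?img ` trees_containing n F = trees_containing n (?img F)" by blast
  then show ?thesis using card_image[OF inj_on_subset[OF inj_img subset_UNIV]] by metis
qed

lemma ex_permutes_map:
  assumes "distinct xs" "distinct ys" "length xs = length ys" "set xs \<subseteq> A" "set ys \<subseteq> A"
  shows "\<exists>p. p permutes A \<and> map p xs = ys"
  using assms
proof (induction xs arbitrary: ys)
  case Nil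
  then show ?case using permutes_id by fastforce
next
  case (Cons x xs)
  then obtain y ys' where ys: "ys = y # ys'" by (cases ys) auto
  with Cons obtain p where p: "p permutes A" "map p xs = ys'" by auto
  \<comment> \<open>correct the image of \<open>x\<close> by a transposition, which fixes \<open>ys'\<close>\<close>
  define q where "q = Transposition.transpose (p x) y \<circ> p"
  have "p x \<notin> set ys'"
    using p Cons.prems(1) permutes_inj[OF p(1)] by (auto simp: inj_image_mem_iff)
  moreover have "y \<notin> set ys'" using Cons.prems(2) ys by simp
  ultimately have "map q xs = map p xs"
    using p(2) by (auto simp: q_def Transposition.transpose_def) (metis imageI)
  moreover have "q permutes A"
    unfolding q_def using Cons.prems ys p(1)
    by (intro permutes_compose permutes_swap_id) (auto simp: permutes_in_image)
  ultimately show ?case using ys p(2) by (auto simp: q_def)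
qed

lemma card_trees_containing_edge:
  assumes "e \<in> complete_edges n" "f \<in> complete_edges n"
  shows "card (trees_containing n {e}) = card (trees_containing n {f})"
proof -
  obtain a b c d where "e = {a, b}" "a \<noteq> b" "f = {c, d}" "c \<noteq> d" "{a, b, c, d} \<subseteq> {..<n}"
    using assms by (auto elim!: complete_edgesE)
  moreover obtain \<sigma> where "\<sigma> permutes {..<n}" "map \<sigma> [a, b] = [c, d]"
    using ex_permutes_map[of "[a, b]" "[c, d]" "{..<n}"] calculation by auto
  ultimately show ?thesis using card_trees_containing_image[of \<sigma> n "{e}"] by simp
qed

lemma card_trees_containing_disjoint_edges:
  assumes "e \<in> complete_edges n" "f \<in> complete_edges n" "e \<inter> f = {}"
    and "e' \<in> complete_edges n" "f' \<in> complete_edges n" "e' \<inter> f' = {}"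
  shows "card (trees_containing n {e, f}) = card (trees_containing n {e', f'})"
proof -
  obtain a b c d a' b' c' d' where
    "e = {a, b}" "f = {c, d}" "distinct [a, b, c, d]" "{a, b, c, d} \<subseteq> {..<n}"
    "e' = {a', b'}" "f' = {c', d'}" "distinct [a', b', c', d']" "{a', b', c', d'} \<subseteq> {..<n}"
    using assms by (auto elim!: complete_edgesE)
  moreover obtain \<sigma> where "\<sigma> permutes {..<n}" "map \<sigma> [a, b, c, d] = [a', b', c', d']"
    using ex_permutes_map[of "[a, b, c, d]" "[a', b', c', d']" "{..<n}"] calculation by auto
  ultimately show ?thesis using card_trees_containing_image[of \<sigma> n "{e, f}"] by simp
qed

lemma sum_card_filter_swap:
  assumes "finite A" "finite B"
  shows "(\<Sum>a\<in>A. card {b \<in> B. P a b}) = (\<Sum>b\<in>B. card {a \<in> A. P a b})"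
proof -
  have "(\<Sum>a\<in>A. card {b \<in> B. P a b}) = (\<Sum>a\<in>A. \<Sum>b\<in>B. if P a b then 1 else 0)"
    using assms(2) by (simp add: sum.inter_filter[symmetric])
  also have "\<dots> = (\<Sum>b\<in>B. \<Sum>a\<in>A. if P a b then 1 else 0)" by (rule sum.swap)
  also have "\<dots> = (\<Sum>b\<in>B. card {a \<in> A. P a b})"
    using assms(1) by (simp add: sum.inter_filter[symmetric])
  finally show ?thesis .
qed

lemma card_offdiagonal:
  assumes "finite A"
  shows "card {(a, b) \<in> A \<times> A. a \<noteq> b} = card A * (card A - 1)"
proof -
  have "{(a, b) \<in> A \<times> A. a \<noteq> b} = A \<times> A - (\<lambda>a. (a, a)) ` A" by auto
  moreover have "card (A \<times> A - (\<lambda>a. (a, a)) ` A) = card (A \<times> A) - card ((\<lambda>a. (a, a)) ` A)"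
    using assms by (intro card_Diff_subset) auto
  moreover have "card ((\<lambda>a. (a, a)) ` A) = card A" by (rule card_image) (auto intro: inj_onI)
  ultimately show ?thesis by (simp add: card_cartesian_product diff_mult_distrib2)
qed

lemma two_mult_choose_two: "2 * (n choose 2) = n * (n - 1)"
  by (induction n) (auto simp: numeral_2_eq_2 algebra_simps)

lemma sum_card_trees_containing_edge:
  assumes "finite M"
  shows "(\<Sum>e\<in>M. card (trees_containing n {e})) = (\<Sum>T\<in>spanning_trees n. card (T \<inter> M))"
proof -
  have "trees_containing n {e} = {T \<in> spanning_trees n. e \<in> T}" for e
    by (simp add: trees_containing_def)
  moreover have "T \<inter> M = {e \<in> M. e \<in> T}" for T by blast
  ultimately show ?thesis
    using sum_card_filter_swap[OF assms finite_spanning_trees, where P = "\<lambda>e T. e \<in> T"] by simp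
qed

lemma sum_card_trees_containing_pair:
  assumes "finite M"
  shows "(\<Sum>(e, f)\<in>{(e, f) \<in> M \<times> M. e \<noteq> f}. card (trees_containing n {e, f}))
         = (\<Sum>T\<in>spanning_trees n. card (T \<inter> M) * (card (T \<inter> M) - 1))"
proof -
  let ?P = "{(e, f) \<in> M \<times> M. e \<noteq> f}"
  have "?P \<subseteq> M \<times> M" by auto
  then have "finite ?P" using assms by (simp add: finite_subset)
  have "(\<Sum>(e, f)\<in>?P. card (trees_containing n {e, f}))
        = (\<Sum>p\<in>?P. card {T \<in> spanning_trees n. fst p \<in> T \<and> snd p \<in> T})"
    by (intro sum.cong) (auto simp: trees_containing_def)
  also have "\<dots> = (\<Sum>T\<in>spanning_trees n. card {p \<in> ?P. fst p \<in> T \<and> snd p \<in> T})"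
    using \<open>finite ?P\<close> finite_spanning_trees by (rule sum_card_filter_swap)
  also have "\<dots> = (\<Sum>T\<in>spanning_trees n. card {(e, f) \<in> (T \<inter> M) \<times> (T \<inter> M). e \<noteq> f})"
    by (intro sum.cong arg_cong[where f = card]) auto
  also have "\<dots> = (\<Sum>T\<in>spanning_trees n. card (T \<inter> M) * (card (T \<inter> M) - 1))"
    using assms by (intro sum.cong card_offdiagonal) simp_all
  finally show ?thesis .
qed

lemma card_spanning_trees_le_edge:
  assumes "e \<in> complete_edges n"
  shows "card (spanning_trees n) \<le> (n - 1) * card (trees_containing n {e})"
proof -
  let ?N = "card (spanning_trees n)" and ?c = "card (trees_containing n {e})"
  have "n \<ge> 2" using assms by (auto elim: complete_edgesE)
  have "?N * n \<le> (\<Sum>T\<in>spanning_trees n. 2 * card T)"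
    using spanning_tree_card_ge[OF \<open>n \<ge> 2\<close>] sum_mono[of "spanning_trees n" "\<lambda>_. n"]
    by (simp add: spanning_trees_def mult.commute)
  also have "\<dots> = 2 * (\<Sum>e\<in>complete_edges n. card (trees_containing n {e}))"
    using spanning_tree_subset
    by (simp add: sum_card_trees_containing_edge finite_complete_edges sum_distrib_left
        spanning_trees_def Int_absorb2)
  also have "\<dots> = 2 * (n choose 2) * ?c"
    using card_trees_containing_edge[OF _ assms] by (simp add: card_complete_edges)
  also have "\<dots> = n * ((n - 1) * ?c)" by (simp add: two_mult_choose_two)
  finally show ?thesis using \<open>n \<ge> 2\<close> by (simp add: mult.commute)
qed

lemma card_disjoint_edge_pairs:
  "card {(e, f) \<in> complete_edges n \<times> complete_edges n. e \<inter> f = {}} = (n choose 2) * ((n - 2) choose 2)"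
proof -
  have disjoint_from: "card {f \<in> complete_edges n. e \<inter> f = {}} = (n - 2) choose 2"
    if "e \<in> complete_edges n" for e
  proof -
    have e: "e \<subseteq> {..<n}" "card e = 2" using that by (auto simp: complete_edges_eq)
    have "{f \<in> complete_edges n. e \<inter> f = {}} = {A. A \<subseteq> {..<n} - e \<and> card A = 2}"
      by (auto simp: complete_edges_eq)
    moreover have "card ({..<n} - e) = n - 2"
      using e card_Diff_subset[OF finite_subset[OF e(1)] e(1)] by simp
    ultimately show ?thesis using n_subsets[of "{..<n} - e" 2] by simp
  qed
  have "{(e, f) \<in> complete_edges n \<times> complete_edges n. e \<inter> f = {}}
        = (SIGMA e:complete_edges n. {f \<in> complete_edges n. e \<inter> f = {}})" by auto
  then show ?thesis
    using disjoint_from by (simp add: card_SigmaI finite_complete_edges card_complete_edges)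
qed

lemma sum_card_trees_containing_pairs_le:
  assumes "finite P"
  shows "(\<Sum>p\<in>P. card (trees_containing n {fst p, snd p})) \<le> card (spanning_trees n) * ((n - 1) * (n - 1))"
proof -
  have "(\<Sum>p\<in>P. card (trees_containing n {fst p, snd p}))
        = (\<Sum>p\<in>P. card {T \<in> spanning_trees n. fst p \<in> T \<and> snd p \<in> T})"
    by (simp add: trees_containing_def)
  also have "\<dots> = (\<Sum>T\<in>spanning_trees n. card {p \<in> P. fst p \<in> T \<and> snd p \<in> T})"
    using assms finite_spanning_trees by (rule sum_card_filter_swap)
  also have "\<dots> \<le> (\<Sum>T\<in>spanning_trees n. card (T \<times> T))"
  proof (intro sum_mono card_mono)
    fix T assume "T \<in> spanning_trees n"
    then have "finite T"
      using spanning_tree_subset finite_complete_edges finite_subset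
      unfolding spanning_trees_def by blast
    then show "finite (T \<times> T)" by simp
  qed auto
  also have "\<dots> \<le> (\<Sum>T\<in>spanning_trees n. (n - 1) * (n - 1))"
    using spanning_tree_card_le
    by (intro sum_mono) (simp add: card_cartesian_product mult_le_mono spanning_trees_def)
  finally show ?thesis by simp
qed

lemma trees_containing_disjoint_edges_le:
  assumes ef: "e \<in> complete_edges n" "f \<in> complete_edges n" "e \<inter> f = {}"
  shows "n * (n - 2) * (n - 3) * card (trees_containing n {e, f}) \<le> 4 * (n - 1) * card (spanning_trees n)"
proof -
  let ?N = "card (spanning_trees n)" and ?d = "card (trees_containing n {e, f})"
  let ?D = "{(e, f) \<in> complete_edges n \<times> complete_edges n. e \<inter> f = {}}"
  have "n \<ge> 2" using ef by (auto elim: complete_edgesE)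
  have "finite ?D" by (rule finite_subset[of _ "complete_edges n \<times> complete_edges n"])
    (auto simp: finite_complete_edges)
  have "(\<Sum>p\<in>?D. card (trees_containing n {fst p, snd p})) = (\<Sum>p\<in>?D. ?d)"
  proof (rule sum.cong[OF refl])
    fix p assume "p \<in> ?D"
    then show "card (trees_containing n {fst p, snd p}) = ?d"
      using card_trees_containing_disjoint_edges[of "fst p" n "snd p" e f] ef by auto
  qed
  then have "(\<Sum>p\<in>?D. card (trees_containing n {fst p, snd p})) = card ?D * ?d" by simp
  moreover have "(\<Sum>p\<in>?D. card (trees_containing n {fst p, snd p})) \<le> ?N * ((n - 1) * (n - 1))"
    using \<open>finite ?D\<close> by (rule sum_card_trees_containing_pairs_le)
  ultimately have "4 * card ?D * ?d \<le> 4 * ?N * ((n - 1) * (n - 1))" by simp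
  moreover have "4 * card ?D = (2 * (n choose 2)) * (2 * ((n - 2) choose 2))"
    using card_disjoint_edge_pairs[of n] by (simp add: mult_ac)
  also have "\<dots> = (n - 1) * (n * (n - 2) * (n - 3))"
    using two_mult_choose_two[of n] two_mult_choose_two[of "n - 2"] by (simp add: mult_ac)
  finally have "(n - 1) * (n * (n - 2) * (n - 3) * ?d) \<le> (n - 1) * (4 * (n - 1) * ?N)"
    by (simp add: mult_ac)
  then show ?thesis using \<open>n \<ge> 2\<close> by simp
qed

lemma card_nonzero_ge:
  assumes "finite A"
  shows "(\<Sum>a\<in>A. real (j a)) - (\<Sum>a\<in>A. real (j a * (j a - 1))) / 2 \<le> real (card {a \<in> A. j a \<noteq> 0})"
proof -
  have pointwise: "real m - real (m * (m - 1)) / 2 \<le> (if m \<noteq> 0 then 1 else 0)" for m :: nat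
  proof (cases "m \<le> 2")
    case True
    then have "m = 0 \<or> m = 1 \<or> m = 2" by auto
    then show ?thesis by auto
  next
    case False
    then have "real m * 2 \<le> real m * (real m - 1)" by (intro mult_left_mono) auto
    moreover have "real (m * (m - 1)) = real m * (real m - 1)" using False by (simp add: of_nat_diff)
    ultimately have "real m - real (m * (m - 1)) / 2 \<le> 0" by linarith
    moreover have "(if m \<noteq> 0 then 1 else 0) = (1::real)" using False by simp
    ultimately show ?thesis by linarith
  qed
  have "(\<Sum>a\<in>A. real (j a)) - (\<Sum>a\<in>A. real (j a * (j a - 1))) / 2
        = (\<Sum>a\<in>A. real (j a) - real (j a * (j a - 1)) / 2)"
    by (simp add: sum_subtractf sum_divide_distrib)
  also have "\<dots> \<le> (\<Sum>a\<in>A. if j a \<noteq> 0 then 1 else 0)" by (intro sum_mono pointwise)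
  also have "\<dots> = real (card {a \<in> A. j a \<noteq> 0})"
    using assms by (simp add: sum.If_cases Int_def)
  finally show ?thesis .
qed

lemma hitting_bound_arith:
  fixes r N c d x :: real
  assumes r: "r \<ge> 8" and N: "N > 0" and c: "N \<le> (r - 1) * c"
    and d: "r * (r - 2) * (r - 3) * d \<le> 4 * (r - 1) * N" "d \<ge> 0"
    and x: "x \<ge> 0" "x * (x - 1) \<ge> 0"
  shows "x / r - 4 * x\<^sup>2 / r\<^sup>2 \<le> (x * c - x * (x - 1) * d / 2) / N"
proof -
  have pos: "r * (r - 2) * (r - 3) > 0" using r by simp
  have "1 / r \<le> c / N"
  proof -
    have "1 / r \<le> 1 / (r - 1)" using r by (simp add: frac_le)
    also have "\<dots> \<le> c / N" using c r N by (simp add: field_simps)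
    finally show ?thesis .
  qed
  moreover have "d / N \<le> 8 / r\<^sup>2"
  proof -
    have "d \<le> 4 * (r - 1) * N / (r * (r - 2) * (r - 3))"
      using d(1) pos by (simp add: pos_le_divide_eq mult.commute)
    then have "d / N \<le> 4 * (r - 1) / (r * (r - 2) * (r - 3))"
      using N by (simp add: pos_divide_le_eq)
    also have "\<dots> \<le> 8 / r\<^sup>2"
    proof -
      have "0 \<le> (r - 8) * (r - 1)" using r by simp
      then have "(r - 1) * r \<le> 2 * ((r - 2) * (r - 3))" by (simp add: algebra_simps)
      from mult_left_mono[OF this, of "4 * r"]
      have "4 * (r - 1) * r\<^sup>2 \<le> 8 * (r * (r - 2) * (r - 3))"
        using r by (simp add: power2_eq_square algebra_simps)
      then have "4 * (r - 1) * r\<^sup>2 / (r * (r - 2) * (r - 3)) / r\<^sup>2 \<le> 8 / r\<^sup>2"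
        using pos by (intro divide_right_mono) (simp_all add: pos_divide_le_eq)
      then show ?thesis using r by (simp add: power2_eq_square mult_ac)
    qed
    finally show ?thesis .
  qed
  ultimately have "x * (1 / r) - x * (x - 1) / 2 * (8 / r\<^sup>2) \<le> x * (c / N) - x * (x - 1) / 2 * (d / N)"
    using x by (intro diff_mono mult_left_mono) simp_all
  moreover have "x / r - 4 * x\<^sup>2 / r\<^sup>2 \<le> x * (1 / r) - x * (x - 1) / 2 * (8 / r\<^sup>2)"
    using x r by (simp add: field_simps power2_eq_square)
  ultimately show ?thesis using N by (simp add: diff_divide_distrib)
qed

text \<open>By symmetry, every edge lies in as many spanning trees as \<open>{0, 1}\<close>, and every pair of
  disjoint edges in as many as \<open>{{0, 1}, {2, 3}}\<close>.\<close>
lemma card_spanning_trees_meeting_matching_ge: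
  assumes n: "n \<ge> 4" and M: "M \<subseteq> complete_edges n"
    and matching: "\<And>e f. e \<in> M \<Longrightarrow> f \<in> M \<Longrightarrow> e \<noteq> f \<Longrightarrow> e \<inter> f = {}"
  shows "real (card M) * card (trees_containing n {{0, 1}})
           - real (card M) * (real (card M) - 1) * card (trees_containing n {{0, 1}, {2, 3}}) / 2
         \<le> real (card {T \<in> spanning_trees n. T \<inter> M \<noteq> {}})"
proof -
  let ?ST = "spanning_trees n"
  define s where "s = card M"
  define j where "j T = card (T \<inter> M)" for T
  define c where "c = card (trees_containing n {{0, 1}})"
  define d where "d = card (trees_containing n {{0, 1}, {2, 3}})"
  have e0: "{0, 1} \<in> complete_edges n" and f0: "{2, 3} \<in> complete_edges n"
    using n unfolding complete_edges_def by force+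
  have "finite M" using M finite_complete_edges finite_subset by blast
  have sum_j: "(\<Sum>T\<in>?ST. j T) = s * c"
  proof -
    have "card (trees_containing n {e}) = c" if "e \<in> M" for e
      using card_trees_containing_edge[OF _ e0] that M unfolding c_def by blast
    then show ?thesis
      using sum_card_trees_containing_edge[OF \<open>finite M\<close>, of n] by (simp add: j_def s_def)
  qed
  have sum_jj: "(\<Sum>T\<in>?ST. j T * (j T - 1)) = s * (s - 1) * d"
  proof -
    have "card (trees_containing n {e, f}) = d" if "e \<in> M" "f \<in> M" "e \<noteq> f" for e f
      using that M matching[OF that] e0 f0 unfolding d_def
      by (intro card_trees_containing_disjoint_edges) auto
    then have "(\<Sum>(e, f)\<in>{(e, f) \<in> M \<times> M. e \<noteq> f}. card (trees_containing n {e, f}))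
          = card {(e, f) \<in> M \<times> M. e \<noteq> f} * d"
      by (simp add: sum.cong[OF refl, where h = "\<lambda>_. d"] case_prod_beta)
    then show ?thesis
      using sum_card_trees_containing_pair[OF \<open>finite M\<close>, of n] card_offdiagonal[OF \<open>finite M\<close>]
      by (simp add: j_def s_def)
  qed
  have "{T \<in> ?ST. j T \<noteq> 0} = {T \<in> ?ST. T \<inter> M \<noteq> {}}"
    using \<open>finite M\<close> by (auto simp: j_def)
  then have bonferroni: "real (s * c) - real (s * (s - 1) * d) / 2 \<le> real (card {T \<in> ?ST. T \<inter> M \<noteq> {}})"
    using card_nonzero_ge[OF finite_spanning_trees[of n], where j = j]
    by (simp only: sum_j sum_jj flip: of_nat_sum)
  have "real (s * (s - 1) * d) = real s * (real s - 1) * d" by (cases s) (auto simp: algebra_simps)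
  from bonferroni[unfolded this, unfolded of_nat_mult] show ?thesis unfolding s_def c_def d_def .
qed

lemma prob_spanning_tree_meets_matching:
  assumes n: "n \<ge> 8" and M: "M \<subseteq> complete_edges n"
    and matching: "\<And>e f. e \<in> M \<Longrightarrow> f \<in> M \<Longrightarrow> e \<noteq> f \<Longrightarrow> e \<inter> f = {}"
  shows "real (card M) / n - 4 * (real (card M))\<^sup>2 / (real n)\<^sup>2
         \<le> measure_pmf.prob (pmf_of_set (spanning_trees n)) {T. T \<inter> M \<noteq> {}}"
proof -
  let ?ST = "spanning_trees n"
  define N where "N = card ?ST"
  define c where "c = card (trees_containing n {{0, 1}})"
  define d where "d = card (trees_containing n {{0, 1}, {2, 3}})"
  have e0: "{0, 1} \<in> complete_edges n" and f0: "{2, 3} \<in> complete_edges n"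
    using n unfolding complete_edges_def by force+
  have "N > 0" unfolding N_def using finite_spanning_trees spanning_trees_nonempty by (simp add: card_gt_0_iff)
  have "real (card M) / n - 4 * (real (card M))\<^sup>2 / (real n)\<^sup>2
        \<le> (real (card M) * c - real (card M) * (real (card M) - 1) * d / 2) / N"
  proof (rule hitting_bound_arith)
    have "real N \<le> real ((n - 1) * c)"
      using card_spanning_trees_le_edge[OF e0] unfolding N_def c_def by (simp only: of_nat_le_iff)
    then show "real N \<le> (real n - 1) * c" using n by (simp add: of_nat_diff)
    have "real (n * (n - 2) * (n - 3) * d) \<le> real (4 * (n - 1) * N)"
      using trees_containing_disjoint_edges_le[OF e0 f0] unfolding N_def d_def
      by (simp only: of_nat_le_iff) simp
    then show "real n * (real n - 2) * (real n - 3) * d \<le> 4 * (real n - 1) * N"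
      using n by (simp add: of_nat_diff)
    show "0 \<le> real (card M) * (real (card M) - 1)" by (cases "card M") auto
  qed (use n \<open>N > 0\<close> in auto)
  also have "\<dots> \<le> real (card {T \<in> ?ST. T \<inter> M \<noteq> {}}) / N"
    using card_spanning_trees_meeting_matching_ge[OF _ M matching] n \<open>N > 0\<close>
    unfolding c_def d_def by (simp add: divide_right_mono)
  also have "\<dots> = measure_pmf.prob (pmf_of_set ?ST) {T. T \<inter> M \<noteq> {}}"
    unfolding N_def using finite_spanning_trees spanning_trees_nonempty
    by (simp add: measure_pmf_of_set Int_def)
  finally show ?thesis .
qed

section \<open>Complete blocks\<close>

definition block :: "nat \<Rightarrow> nat \<Rightarrow> nat set" where
  "block k j = {j * k..<j * k + k}"

definition block_edges :: "nat \<Rightarrow> nat \<Rightarrow> nat set set" where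
  "block_edges k n = {{x, y} | x y j. j < n div k \<and> x \<in> block k j \<and> y \<in> block k j \<and> x \<noteq> y}"

definition complete_blocks :: "nat \<Rightarrow> nat \<Rightarrow> nat set set \<Rightarrow> nat set" where
  "complete_blocks k n H =
     {j. j < n div k \<and> (\<forall>x\<in>block k j. \<forall>y\<in>block k j. x \<noteq> y \<longrightarrow> {x, y} \<in> H)}"

definition enough_blocks :: "nat \<Rightarrow> real \<Rightarrow> nat \<Rightarrow> nat set set \<Rightarrow> bool" where
  "enough_blocks k \<epsilon> n H \<longleftrightarrow> (1 - \<epsilon>) * real n / real k \<le> real (card (complete_blocks k n H))"

definition block_strategy :: "nat \<Rightarrow> nat \<Rightarrow> nat set set \<Rightarrow> nat set set \<Rightarrow> nat set" where
  "block_strategy k n H T =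
     (SOME e. e \<in> T \<and> (T \<inter> (block_edges k n - H) \<noteq> {} \<longrightarrow> e \<in> block_edges k n - H))"

lemma block_div: "x \<in> block k j \<Longrightarrow> x div k = j"
  unfolding block_def by (auto intro: div_nat_eqI simp: mult.commute)

lemma block_disjoint: "x \<in> block k i \<Longrightarrow> x \<in> block k j \<Longrightarrow> i = j"
  using block_div by blast

lemma block_less: "j < n div k \<Longrightarrow> x \<in> block k j \<Longrightarrow> x < n"
proof -
  assume "j < n div k" "x \<in> block k j"
  then have "x < (j + 1) * k" by (simp add: block_def)
  also have "\<dots> \<le> n div k * k" using \<open>j < n div k\<close> by (intro mult_right_mono) auto
  also have "\<dots> \<le> n" by simp
  finally show "x < n" .
qed

lemma block_edges_subset: "block_edges k n \<subseteq> complete_edges n"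
  unfolding block_edges_def complete_edges_def using block_less by blast

lemma finite_block_edges: "finite (block_edges k n)"
  using block_edges_subset finite_complete_edges by (rule finite_subset)

lemma card_block_edges_le: "card (block_edges k n) \<le> n * k"
proof -
  let ?pairs = "\<lambda>j. (\<lambda>(x, y). {x, y}) ` (block k j \<times> block k j)"
  have "block_edges k n \<subseteq> (\<Union>j<n div k. ?pairs j)"
    unfolding block_edges_def by auto
  then have "card (block_edges k n) \<le> card (\<Union>j<n div k. ?pairs j)"
    by (intro card_mono) (auto simp: block_def)
  also have "\<dots> \<le> (\<Sum>j<n div k. card (?pairs j))" by (rule card_UN_le) simp
  also have "\<dots> \<le> (\<Sum>j<n div k. k * k)"
    by (intro sum_mono order_trans[OF card_image_le]) (auto simp: block_def card_cartesian_product)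
  also have "\<dots> \<le> n * k" using div_times_less_eq_dividend[of n k] by (simp add: mult_right_mono)
  finally show ?thesis .
qed

lemma enough_blocks_mono: "enough_blocks k \<epsilon> n H \<Longrightarrow> H \<subseteq> H' \<Longrightarrow> enough_blocks k \<epsilon> n H'"
proof -
  assume "enough_blocks k \<epsilon> n H" "H \<subseteq> H'"
  moreover have "complete_blocks k n H \<subseteq> complete_blocks k n H'"
    using \<open>H \<subseteq> H'\<close> unfolding complete_blocks_def by blast
  then have "card (complete_blocks k n H) \<le> card (complete_blocks k n H')"
    by (intro card_mono) (auto simp: complete_blocks_def)
  ultimately show ?thesis unfolding enough_blocks_def by linarith
qed

lemma block_strategy_mem:
  assumes "T \<noteq> {}"
  shows "block_strategy k n H T \<in> T"
    and "T \<inter> (block_edges k n - H) \<noteq> {} \<Longrightarrow> block_strategy k n H T \<in> block_edges k n - H"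
proof -
  have "\<exists>e. e \<in> T \<and> (T \<inter> (block_edges k n - H) \<noteq> {} \<longrightarrow> e \<in> block_edges k n - H)"
    using assms by blast
  from someI_ex[OF this] show "block_strategy k n H T \<in> T"
    and "T \<inter> (block_edges k n - H) \<noteq> {} \<Longrightarrow> block_strategy k n H T \<in> block_edges k n - H"
    unfolding block_strategy_def by blast+
qed

lemma has_disjoint_copies_complete_blocks:
  assumes "finite VG" and k: "k = card VG"
    and EG: "EG \<subseteq> {{u, v} | u v. u \<in> VG \<and> v \<in> VG \<and> u \<noteq> v}"
  shows "has_disjoint_copies VG EG n H (card (complete_blocks k n H))"
proof -
  let ?C = "complete_blocks k n H"
  have "finite ?C" unfolding complete_blocks_def by simp
  then obtain g where g: "bij_betw g {0..<card ?C} ?C" using ex_bij_betw_nat_finite by blast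
  obtain h where h: "bij_betw h VG {0..<k}" using ex_bij_betw_finite_nat[OF \<open>finite VG\<close>] k by blast
  define f where "f i v = g i * k + h v" for i v
  have g_block: "g i < n div k" "\<And>x y. x \<in> block k (g i) \<Longrightarrow> y \<in> block k (g i) \<Longrightarrow> x \<noteq> y \<Longrightarrow> {x, y} \<in> H"
    if "i < card ?C" for i
  proof -
    have "g i \<in> ?C" using bij_betwE[OF g] that by simp
    then show "g i < n div k"
      and "\<And>x y. x \<in> block k (g i) \<Longrightarrow> y \<in> block k (g i) \<Longrightarrow> x \<noteq> y \<Longrightarrow> {x, y} \<in> H"
      unfolding complete_blocks_def by blast+
  qed
  have in_block: "f i v \<in> block k (g i)" if "v \<in> VG" for i v
    using bij_betwE[OF h] that unfolding f_def block_def by simp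
  have inj: "inj_on (f i) VG" for i
    using bij_betw_imp_inj_on[OF h] unfolding f_def inj_on_def by simp
  have "f i ` VG \<subseteq> {..<n}" if "i < card ?C" for i
    using block_less[OF g_block(1)[OF that] in_block] by blast
  moreover have "f i ` e \<in> H" if "i < card ?C" "e \<in> EG" for i e
  proof -
    obtain u v where uv: "e = {u, v}" "u \<in> VG" "v \<in> VG" "u \<noteq> v" using EG \<open>e \<in> EG\<close> by blast
    then have "f i u \<noteq> f i v" using inj_onD[OF inj] by blast
    then have "{f i u, f i v} \<in> H" using g_block(2)[OF \<open>i < card ?C\<close> in_block in_block] uv by blast
    then show ?thesis using uv(1) by simp
  qed
  moreover have "f i ` VG \<inter> f j ` VG = {}" if "i < card ?C" "j < card ?C" "i \<noteq> j" for i j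
  proof -
    have "g i \<noteq> g j" using inj_onD[OF bij_betw_imp_inj_on[OF g]] that by auto
    moreover have "g i = g j" if "u \<in> VG" "v \<in> VG" "f i u = f j v" for u v
      using in_block[OF that(1), of i] in_block[OF that(2), of j] that(3) by (metis block_disjoint)
    ultimately show ?thesis by blast
  qed
  ultimately show ?thesis unfolding has_disjoint_copies_def using inj by (intro exI[of _ f]) simp
qed

lemma card_incomplete_blocks_gt:
  assumes "k > 0" and not_enough: "\<not> enough_blocks k \<epsilon> n H"
  shows "\<epsilon> * real n / real k - 1 < real (card ({..<n div k} - complete_blocks k n H))"
proof -
  have sub: "complete_blocks k n H \<subseteq> {..<n div k}" by (auto simp: complete_blocks_def)
  then have "card (complete_blocks k n H) \<le> n div k" using card_mono[OF finite_lessThan] by fastforce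
  then have "real (card ({..<n div k} - complete_blocks k n H))
             = real (n div k) - real (card (complete_blocks k n H))"
    using card_Diff_subset[OF finite_subset[OF sub finite_lessThan] sub] by (simp add: of_nat_diff)
  moreover have "real n / real k < real (n div k) + 1"
  proof -
    have "n < n div k * k + k" using \<open>k > 0\<close> div_mult_mod_eq[of n k] mod_less_divisor[of k n] by linarith
    then have "real n < real (n div k) * real k + real k" by (metis of_nat_add of_nat_mult of_nat_less_iff)
    then show ?thesis using \<open>k > 0\<close> by (simp add: divide_less_eq algebra_simps)
  qed
  moreover have "(1 - \<epsilon>) * real n / real k = real n / real k - \<epsilon> * real n / real k"
    by (simp add: algebra_simps diff_divide_distrib)
  ultimately show ?thesis using not_enough unfolding enough_blocks_def by linarith
qed

lemma missing_block_edges_matching: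
  assumes "k > 0" and not_enough: "\<not> enough_blocks k \<epsilon> n H"
    and s: "real s \<le> \<epsilon> * real n / real k - 1"
  obtains M where "M \<subseteq> block_edges k n - H" "card M = s"
    "\<And>e f. e \<in> M \<Longrightarrow> f \<in> M \<Longrightarrow> e \<noteq> f \<Longrightarrow> e \<inter> f = {}"
proof -
  define I where "I = {..<n div k} - complete_blocks k n H"
  have "real s < real (card I)"
    using card_incomplete_blocks_gt[OF assms(1,2)] s unfolding I_def by linarith
  then have "s \<le> card I" by simp
  then obtain J where J: "J \<subseteq> I" "card J = s" "finite J"
    using obtain_subset_with_card_n by metis
  have "\<forall>j\<in>I. \<exists>e. e \<in> block_edges k n - H \<and> e \<subseteq> block k j \<and> e \<noteq> {}"
  proof
    fix j assume "j \<in> I"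
    then obtain x y where "x \<in> block k j" "y \<in> block k j" "x \<noteq> y" "{x, y} \<notin> H" "j < n div k"
      unfolding I_def complete_blocks_def by blast
    then have "{x, y} \<in> block_edges k n - H" "{x, y} \<subseteq> block k j" unfolding block_edges_def by blast+
    then show "\<exists>e. e \<in> block_edges k n - H \<and> e \<subseteq> block k j \<and> e \<noteq> {}" by blast
  qed
  then obtain m where m: "\<And>j. j \<in> I \<Longrightarrow> m j \<in> block_edges k n - H \<and> m j \<subseteq> block k j \<and> m j \<noteq> {}"
    using bchoice by metis
  have disjoint: "m i \<inter> m j = {}" if ij: "i \<in> J" "j \<in> J" "i \<noteq> j" for i j
  proof (rule ccontr)
    assume "m i \<inter> m j \<noteq> {}"
    then obtain x where "x \<in> block k i" "x \<in> block k j" using m[of i] m[of j] ij(1,2) J(1) by blast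
    then show False using block_disjoint \<open>i \<noteq> j\<close> by blast
  qed
  have "inj_on m J"
  proof (rule inj_onI)
    fix i j assume "i \<in> J" "j \<in> J" "m i = m j"
    then show "i = j" using disjoint[of i j] m[of i] J(1) by auto
  qed
  show ?thesis
  proof
    show "m ` J \<subseteq> block_edges k n - H" using m J(1) by blast
    show "card (m ` J) = s" using card_image[OF \<open>inj_on m J\<close>] J(2) by simp
    show "e \<inter> f = {}" if "e \<in> m ` J" "f \<in> m ` J" "e \<noteq> f" for e f
      using that disjoint by blast
  qed
qed

lemma prob_meets_missing_block_edges:
  assumes "k > 0" and \<delta>: "0 < \<delta>" "\<delta> \<le> 1/32" "\<delta> \<le> \<epsilon> / (4 * real k)"
    and n: "n \<ge> 8" "1 \<le> \<delta> * real n" "4 \<le> \<epsilon> * real n / real k"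
    and not_enough: "\<not> enough_blocks k \<epsilon> n H"
  shows "\<delta> / 2 \<le> measure_pmf.prob (pmf_of_set (spanning_trees n)) {T. T \<inter> (block_edges k n - H) \<noteq> {}}"
proof -
  \<comment> \<open>a matching of about \<open>\<delta> n\<close> missing edges is hit with probability about \<open>\<delta>\<close>\<close>
  define s where "s = nat \<lceil>\<delta> * real n\<rceil>"
  have s: "\<delta> * real n \<le> real s" "real s \<le> \<delta> * real n + 1"
    using n(2) by (simp_all add: s_def of_nat_ceiling)
  have "\<delta> * real n \<le> \<epsilon> * real n / real k / 4"
    using mult_right_mono[OF \<delta>(3), of "real n"] by (simp add: field_simps)
  then have "real s \<le> \<epsilon> * real n / real k - 1"
    using s n(3) by (simp add: field_simps)
  then obtain M where M: "M \<subseteq> block_edges k n - H" "card M = s"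
    "\<And>e f. e \<in> M \<Longrightarrow> f \<in> M \<Longrightarrow> e \<noteq> f \<Longrightarrow> e \<inter> f = {}"
    using missing_block_edges_matching[OF \<open>k > 0\<close> not_enough] by blast
  have "M \<subseteq> complete_edges n" using M(1) block_edges_subset by blast
  define x where "x = real s / real n"
  have x: "\<delta> \<le> x" "x \<le> 2 * \<delta>" using s n(1,2) by (simp_all add: x_def field_simps)
  have "\<delta> / 2 \<le> x * (1 - 4 * x)"
  proof -
    have "3 / 4 \<le> 1 - 4 * x" using x(2) \<delta>(2) by linarith
    then have "x * (3 / 4) \<le> x * (1 - 4 * x)" using x(1) \<delta>(1) by (intro mult_left_mono) auto
    then show ?thesis using x(1) \<delta>(1) by linarith
  qed
  also have "x * (1 - 4 * x) = real (card M) / real n - 4 * (real (card M))\<^sup>2 / (real n)\<^sup>2"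
    using n(1) by (simp add: x_def M(2) power2_eq_square field_simps)
  also have "\<dots> \<le> measure_pmf.prob (pmf_of_set (spanning_trees n)) {T. T \<inter> M \<noteq> {}}"
    by (rule prob_spanning_tree_meets_matching[OF n(1) \<open>M \<subseteq> complete_edges n\<close> M(3)])
  also have "\<dots> \<le> measure_pmf.prob (pmf_of_set (spanning_trees n)) {T. T \<inter> (block_edges k n - H) \<noteq> {}}"
    using M(1) by (intro measure_pmf.finite_measure_mono) auto
  finally show ?thesis .
qed

section \<open>The potential argument\<close>

lemma nn_integral_ustsr_graph_le:
  assumes step: "\<And>H. (\<integral>\<^sup>+T. W (insert (S H T) H) \<partial>pmf_of_set (spanning_trees n)) \<le> ennreal r * W H"
    and "r \<ge> 0"
  shows "(\<integral>\<^sup>+H. W H \<partial>ustsr_graph n S t) \<le> ennreal (r ^ t) * W {}"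
proof (induction t)
  case (Suc t)
  have "(\<integral>\<^sup>+H. W H \<partial>ustsr_graph n S (Suc t))
        = (\<integral>\<^sup>+H. (\<integral>\<^sup>+T. W (insert (S H T) H) \<partial>pmf_of_set (spanning_trees n)) \<partial>ustsr_graph n S t)"
    by simp
  also have "\<dots> \<le> (\<integral>\<^sup>+H. ennreal r * W H \<partial>ustsr_graph n S t)"
    by (intro nn_integral_mono step)
  also have "\<dots> = ennreal r * (\<integral>\<^sup>+H. W H \<partial>ustsr_graph n S t)"
    by (rule nn_integral_cmult) simp
  also have "\<dots> \<le> ennreal r * (ennreal (r ^ t) * W {})"
    by (intro mult_left_mono Suc.IH) simp
  also have "\<dots> = ennreal (r ^ Suc t) * W {}"
    using \<open>r \<ge> 0\<close> by (simp add: ennreal_mult mult_ac)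
  finally show ?case .
qed simp

definition potential :: "nat \<Rightarrow> real \<Rightarrow> nat \<Rightarrow> nat set set \<Rightarrow> ennreal" where
  "potential k \<epsilon> n H =
     (if enough_blocks k \<epsilon> n H then 0 else ennreal ((1/2) ^ card (H \<inter> block_edges k n)))"

lemma potential_insert_block_strategy_le:
  "potential k \<epsilon> n (insert (block_strategy k n H T) H)
   \<le> ennreal ((if T \<inter> (block_edges k n - H) \<noteq> {} then 1/2 else 1) * (1/2) ^ card (H \<inter> block_edges k n))"
proof (cases "T \<inter> (block_edges k n - H) \<noteq> {}")
  case True
  then have "block_strategy k n H T \<in> block_edges k n - H" by (intro block_strategy_mem(2)) auto
  then have "card (insert (block_strategy k n H T) H \<inter> block_edges k n) = Suc (card (H \<inter> block_edges k n))"
    using finite_block_edges by (simp add: Int_insert_left)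
  then show ?thesis using True by (simp add: potential_def)
next
  case False
  have "card (H \<inter> block_edges k n) \<le> card (insert (block_strategy k n H T) H \<inter> block_edges k n)"
    using finite_block_edges by (intro card_mono) auto
  then have "((1::real)/2) ^ card (insert (block_strategy k n H T) H \<inter> block_edges k n)
             \<le> (1/2) ^ card (H \<inter> block_edges k n)"
    by (intro power_decreasing) auto
  then show ?thesis using False by (simp add: potential_def ennreal_leI)
qed

lemma potential_step:
  assumes "0 \<le> p" "p \<le> 1"
    and hit: "\<not> enough_blocks k \<epsilon> n H \<Longrightarrow>
      p \<le> measure_pmf.prob (pmf_of_set (spanning_trees n)) {T. T \<inter> (block_edges k n - H) \<noteq> {}}"
  shows "(\<integral>\<^sup>+T. potential k \<epsilon> n (insert (block_strategy k n H T) H) \<partial>pmf_of_set (spanning_trees n))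
         \<le> ennreal (1 - p / 2) * potential k \<epsilon> n H"
proof (cases "enough_blocks k \<epsilon> n H")
  case True
  then have "potential k \<epsilon> n (insert (block_strategy k n H T) H) = 0" for T
    unfolding potential_def using enough_blocks_mono[OF True] by auto
  then show ?thesis by simp
next
  case False
  let ?ST = "spanning_trees n" and ?hit = "{T. T \<inter> (block_edges k n - H) \<noteq> {}}"
  define w :: real where "w = (1/2) ^ card (H \<inter> block_edges k n)"
  define g where "g T = (if T \<in> ?hit then 1/2 else 1) * w" for T
  have "w \<ge> 0" by (simp add: w_def)
  have "(\<integral>\<^sup>+T. potential k \<epsilon> n (insert (block_strategy k n H T) H) \<partial>pmf_of_set ?ST)
        \<le> (\<integral>\<^sup>+T. ennreal (g T) \<partial>pmf_of_set ?ST)"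
    using potential_insert_block_strategy_le unfolding g_def w_def by (intro nn_integral_mono) simp
  also have "\<dots> = ennreal (measure_pmf.expectation (pmf_of_set ?ST) g)"
    using \<open>w \<ge> 0\<close> by (intro nn_integral_eq_integral) (auto simp: g_def integrable_measure_pmf_finite
        finite_spanning_trees spanning_trees_nonempty)
  also have "measure_pmf.expectation (pmf_of_set ?ST) g = w * (1 - measure_pmf.prob (pmf_of_set ?ST) ?hit / 2)"
  proof -
    have "g = (\<lambda>T. w - w / 2 * indicator ?hit T)" by (auto simp: g_def fun_eq_iff)
    then show ?thesis
      using finite_spanning_trees spanning_trees_nonempty
      by (simp add: integrable_measure_pmf_finite measure_pmf.prob_space algebra_simps)
  qed
  also have "ennreal (w * (1 - measure_pmf.prob (pmf_of_set ?ST) ?hit / 2)) \<le> ennreal (w * (1 - p / 2))"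
    using hit[OF False] \<open>w \<ge> 0\<close> by (intro ennreal_leI mult_left_mono) auto
  also have "\<dots> = ennreal (1 - p / 2) * potential k \<epsilon> n H"
    using False \<open>w \<ge> 0\<close> \<open>p \<le> 1\<close> by (simp add: potential_def w_def ennreal_mult' mult.commute)
  finally show ?thesis .
qed

lemma indicator_not_enough_blocks_le_potential:
  "indicator {H. \<not> enough_blocks k \<epsilon> n H} H \<le> ennreal (2 ^ card (block_edges k n)) * potential k \<epsilon> n H"
proof (cases "enough_blocks k \<epsilon> n H")
  case False
  let ?c = "card (H \<inter> block_edges k n)"
  have "?c \<le> card (block_edges k n)" using finite_block_edges by (intro card_mono) auto
  then have "(2::real) ^ ?c * (1/2) ^ ?c \<le> 2 ^ card (block_edges k n) * (1/2) ^ ?c"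
    by (intro mult_right_mono power_increasing) auto
  then have "(1::real) \<le> 2 ^ card (block_edges k n) * (1/2) ^ ?c"
    by (simp add: power_mult_distrib[symmetric])
  then show ?thesis using False by (simp add: potential_def ennreal_mult[symmetric] ennreal_leI)
qed simp

lemma prob_enough_blocks_ge:
  assumes "0 \<le> p" "p \<le> 1"
    and hit: "\<And>H. \<not> enough_blocks k \<epsilon> n H \<Longrightarrow>
      p \<le> measure_pmf.prob (pmf_of_set (spanning_trees n)) {T. T \<inter> (block_edges k n - H) \<noteq> {}}"
  shows "1 - 2 ^ card (block_edges k n) * (1 - p / 2) ^ t
         \<le> measure_pmf.prob (ustsr_graph n (block_strategy k n) t) {H. enough_blocks k \<epsilon> n H}"
proof -
  let ?D = "ustsr_graph n (block_strategy k n) t" and ?L = "card (block_edges k n)"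
  define r where "r = 1 - p / 2"
  have "r \<ge> 0" using assms(1,2) by (simp add: r_def)
  have "(\<integral>\<^sup>+H. indicator {H. \<not> enough_blocks k \<epsilon> n H} H \<partial>?D)
        \<le> (\<integral>\<^sup>+H. ennreal (2 ^ ?L) * potential k \<epsilon> n H \<partial>?D)"
    by (intro nn_integral_mono indicator_not_enough_blocks_le_potential)
  then have "emeasure ?D {H. \<not> enough_blocks k \<epsilon> n H} \<le> ennreal (2 ^ ?L) * (\<integral>\<^sup>+H. potential k \<epsilon> n H \<partial>?D)"
    by (simp add: nn_integral_indicator nn_integral_cmult)
  also have "\<dots> \<le> ennreal (2 ^ ?L) * (ennreal (r ^ t) * potential k \<epsilon> n {})"
    using potential_step[OF assms(1,2) hit] \<open>r \<ge> 0\<close> unfolding r_def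
    by (intro mult_left_mono nn_integral_ustsr_graph_le) auto
  also have "\<dots> \<le> ennreal (2 ^ ?L) * (ennreal (r ^ t) * 1)"
    by (intro mult_left_mono) (auto simp: potential_def)
  also have "\<dots> = ennreal (2 ^ ?L * r ^ t)"
    using \<open>r \<ge> 0\<close> by (simp add: ennreal_mult)
  finally have "measure_pmf.prob ?D {H. \<not> enough_blocks k \<epsilon> n H} \<le> 2 ^ ?L * r ^ t"
    using \<open>r \<ge> 0\<close> by (simp add: measure_pmf.emeasure_eq_measure)
  moreover have "{H. enough_blocks k \<epsilon> n H} = space (measure_pmf ?D) - {H. \<not> enough_blocks k \<epsilon> n H}"
    by auto
  ultimately show ?thesis
    using measure_pmf.prob_compl[of "{H. \<not> enough_blocks k \<epsilon> n H}" ?D] unfolding r_def by simp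
qed

lemma eventually_real_ge: "\<forall>\<^sub>F n in sequentially. X \<le> real n"
proof -
  have "\<forall>\<^sub>F n in sequentially. nat \<lceil>X\<rceil> \<le> n" by (rule eventually_ge_at_top)
  then show ?thesis by eventually_elim (meson of_nat_le_iff order_trans real_nat_ceiling_ge)
qed

lemma eventually_prob_meets_missing_block_edges:
  assumes "k > 0" "\<epsilon> > 0"
  obtains p where "0 < p" "p \<le> 1"
    "\<forall>\<^sub>F n in sequentially. \<forall>H. \<not> enough_blocks k \<epsilon> n H \<longrightarrow>
       p \<le> measure_pmf.prob (pmf_of_set (spanning_trees n)) {T. T \<inter> (block_edges k n - H) \<noteq> {}}"
proof
  define \<delta> where "\<delta> = min (\<epsilon> / (4 * real k)) (1/32)"
  have \<delta>: "0 < \<delta>" "\<delta> \<le> 1/32" "\<delta> \<le> \<epsilon> / (4 * real k)" using assms by (auto simp: \<delta>_def)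
  show "0 < \<delta> / 2" "\<delta> / 2 \<le> 1" using \<delta> by auto
  have "\<forall>\<^sub>F n in sequentially. 8 \<le> real n \<and> 1 / \<delta> \<le> real n \<and> 4 * real k / \<epsilon> \<le> real n"
    by (intro eventually_conj eventually_real_ge)
  then show "\<forall>\<^sub>F n in sequentially. \<forall>H. \<not> enough_blocks k \<epsilon> n H \<longrightarrow>
       \<delta> / 2 \<le> measure_pmf.prob (pmf_of_set (spanning_trees n)) {T. T \<inter> (block_edges k n - H) \<noteq> {}}"
  proof eventually_elim
    case (elim n)
    then have "n \<ge> 8" "1 \<le> \<delta> * real n" "4 \<le> \<epsilon> * real n / real k"
      using \<delta>(1) assms by (auto simp: field_simps)
    then show ?case using prob_meets_missing_block_edges[OF \<open>k > 0\<close> \<delta>] by blast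
  qed
qed

lemma two_pow_card_block_edges_mult_le:
  fixes r :: real
  assumes c: "r ^ c < (1/2) ^ (k + 1)" and "0 \<le> r"
  shows "2 ^ card (block_edges k n) * r ^ (c * n) \<le> (1/2) ^ n"
proof -
  have "(2::real) ^ card (block_edges k n) \<le> 2 ^ (n * k)"
    by (rule power_increasing[OF card_block_edges_le]) simp
  moreover have "r ^ (c * n) \<le> ((1/2) ^ (k + 1)) ^ n"
    unfolding power_mult using c \<open>0 \<le> r\<close> by (intro power_mono) auto
  ultimately have "2 ^ card (block_edges k n) * r ^ (c * n) \<le> 2 ^ (n * k) * ((1/2) ^ (k + 1)) ^ n"
    using \<open>0 \<le> r\<close> by (intro mult_mono) auto
  also have "\<dots> = ((2::real) ^ k * (1/2) ^ (k + 1)) ^ n"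
    unfolding power_mult_distrib by (simp add: power_mult[symmetric] mult.commute)
  also have "(2::real) ^ k * (1/2) ^ (k + 1) = 1/2" by (simp add: power_mult_distrib[symmetric])
  finally show ?thesis .
qed

lemma tendsto_prob_enough_blocks:
  assumes "k > 0" "\<epsilon> > 0"
  obtains c :: nat where "c > 0"
    "(\<lambda>n. measure_pmf.prob (ustsr_graph n (block_strategy k n) (c * n)) {H. enough_blocks k \<epsilon> n H})
       \<longlonglongrightarrow> 1"
proof -
  obtain p where p: "0 < p" "p \<le> 1" and hit: "\<forall>\<^sub>F n in sequentially. \<forall>H. \<not> enough_blocks k \<epsilon> n H \<longrightarrow>
       p \<le> measure_pmf.prob (pmf_of_set (spanning_trees n)) {T. T \<inter> (block_edges k n - H) \<noteq> {}}"
    using eventually_prob_meets_missing_block_edges[OF assms] by blast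
  define r where "r = 1 - p / 2"
  have r: "0 < r" "r < 1" using p by (auto simp: r_def)
  \<comment> \<open>\<open>c\<close> is chosen so that \<open>r\<^sup>c\<close> beats the \<open>2\<^sup>k\<close> per vertex coming from the \<open>n k\<close> block edges\<close>
  obtain c :: nat where c: "r ^ c < (1/2) ^ (k + 1)"
    using real_arch_pow_inv[of "(1/2) ^ (k + 1)" r] r by auto
  have "c > 0"
  proof (rule ccontr)
    assume "\<not> c > 0"
    then have "(1::real) < (1/2) ^ (k + 1)" using c by simp
    moreover have "((1::real)/2) ^ (k + 1) \<le> 1" by (rule power_le_one) auto
    ultimately show False by simp
  qed
  have lower: "\<forall>\<^sub>F n in sequentially.
    1 - (1/2) ^ n \<le> measure_pmf.prob (ustsr_graph n (block_strategy k n) (c * n)) {H. enough_blocks k \<epsilon> n H}"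
    using hit
  proof eventually_elim
    case (elim n)
    then have "1 - 2 ^ card (block_edges k n) * r ^ (c * n)
        \<le> measure_pmf.prob (ustsr_graph n (block_strategy k n) (c * n)) {H. enough_blocks k \<epsilon> n H}"
      unfolding r_def using p by (intro prob_enough_blocks_ge) auto
    then show ?case using two_pow_card_block_edges_mult_le[OF c less_imp_le[OF r(1)], of n] by linarith
  qed
  have upper: "\<forall>\<^sub>F n in sequentially.
    measure_pmf.prob (ustsr_graph n (block_strategy k n) (c * n)) {H. enough_blocks k \<epsilon> n H} \<le> 1"
    by (simp add: measure_pmf.prob_le_1)
  have "(\<lambda>n. 1 - (1/2::real) ^ n) \<longlonglongrightarrow> 1"
    using tendsto_diff[OF tendsto_const LIMSEQ_power_zero[of "1/2::real"]] by simp
  from tendsto_sandwich[OF lower upper this tendsto_const] \<open>c > 0\<close> show ?thesis by (intro that)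
qed

theorem lemma3p6:
  fixes VG :: "'a set" and EG :: "'a set set" and \<epsilon> :: real
  assumes "finite VG" and "VG \<noteq> {}"
    and "EG \<subseteq> {{u, v} | u v. u \<in> VG \<and> v \<in> VG \<and> u \<noteq> v}"
    and "\<epsilon> > 0"
  shows "\<exists>C :: real. C > 0 \<and>
    (\<exists>S :: nat \<Rightarrow> nat set set \<Rightarrow> nat set set \<Rightarrow> nat set.
       (\<forall>n\<ge>2. \<forall>H T. spanning_tree n T \<longrightarrow> S n H T \<in> T) \<and>
       (\<lambda>n. measure_pmf.prob (ustsr_graph n (S n) (nat \<lfloor>C * real n\<rfloor>))
              {H. \<exists>m. real m \<ge> (1 - \<epsilon>) * real n / real (card VG) \<and>
                      has_disjoint_copies VG EG n H m})
         \<longlonglongrightarrow> 1)"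
proof -
  define k where "k = card VG"
  have "k > 0" using assms(1,2) by (simp add: k_def card_gt_0_iff)
  obtain c :: nat where "c > 0" and enough: "(\<lambda>n. measure_pmf.prob (ustsr_graph n (block_strategy k n) (c * n))
      {H. enough_blocks k \<epsilon> n H}) \<longlonglongrightarrow> 1"
    using tendsto_prob_enough_blocks[OF \<open>k > 0\<close> assms(4)] by blast
  let ?copies = "\<lambda>n. {H. \<exists>m. real m \<ge> (1 - \<epsilon>) * real n / real (card VG) \<and>
                      has_disjoint_copies VG EG n H m}"
  have "{H. enough_blocks k \<epsilon> n H} \<subseteq> ?copies n" for n
    using has_disjoint_copies_complete_blocks[OF assms(1) k_def assms(3)]
    unfolding enough_blocks_def k_def by blast
  then have "\<forall>\<^sub>F n in sequentially.
      measure_pmf.prob (ustsr_graph n (block_strategy k n) (c * n)) {H. enough_blocks k \<epsilon> n H}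
      \<le> measure_pmf.prob (ustsr_graph n (block_strategy k n) (nat \<lfloor>real c * real n\<rfloor>)) (?copies n)"
    by (simp add: measure_pmf.finite_measure_mono flip: of_nat_mult)
  from tendsto_sandwich[OF this _ enough tendsto_const] have
    "(\<lambda>n. measure_pmf.prob (ustsr_graph n (block_strategy k n) (nat \<lfloor>real c * real n\<rfloor>)) (?copies n))
       \<longlonglongrightarrow> 1"
    by (simp add: measure_pmf.prob_le_1)
  moreover have "block_strategy k n H T \<in> T" if "n \<ge> 2" "spanning_tree n T" for n H T
    using spanning_tree_covers[OF that, of 0] that(1) by (intro block_strategy_mem(1)) auto
  ultimately show ?thesis using \<open>c > 0\<close> by (intro exI[of _ "real c"] exI[of _ "block_strategy k"]) auto
qed

end
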